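(* Let $F$ be an algebraically closed field. (i) If $\mathrm{char}\,F\ne2$, then the $1$-dimensional maximal Mathieu subspaces of $M_2(F)$ are exactly the subspaces $F(I_2+c)$ with $c\in M_2(F)$ nonzero and nilpotent. (ii) If $\mathrm{char}\,F=2$, then $M_2(F)$ has no $1$-dimensional maximal Mathieu subspace.
   Context: Let $\mathcal A$ be an associative algebra over a field $F$. An $F$-subspace $M\subseteq\mathcal A$ is a Mathieu subspace (MS) of $\mathcal A$ if for all $a,b,c\in\mathcal A$ such that $a^m\in M$ for all $m\ge 1$, there exists $N$ (depending on $a,b,c$) such that $ba^mc\in M$ for all $m\ge N$. A maximal MS of $\mathcal A$ is a proper MS of $\mathcal A$ that is not properly contained in any proper MS of $\mathcal A$. *)

theory Defs
  imports "HOL-Analysis.Analysis" "HOL-Computational_Algebra.Polynomial"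
begin

text \<open>Matrices over F are 'a^'n^'n (HOL-Analysis); the matrix product is (**),
  the identity is mat 1. Scalar multiplication of a matrix by an element of F:\<close>
definition smat :: "'a::times \<Rightarrow> 'a^'n^'m \<Rightarrow> 'a^'n^'m" where
  "smat t A = (\<chi> i j. t * (A $ i $ j))"

definition matpow :: "'a::semiring_1^'n^'n \<Rightarrow> nat \<Rightarrow> 'a^'n^'n" where
  "matpow A m = (((**) A) ^^ m) (mat 1)"

definition mat_nilpotent :: "'a::semiring_1^'n^'n \<Rightarrow> bool" where
  "mat_nilpotent A \<longleftrightarrow> (\<exists>k. matpow A k = 0)"

definition mat_subspace :: "('a::field^'n^'n) set \<Rightarrow> bool" where
  "mat_subspace M \<longleftrightarrow> 0 \<in> M \<and> (\<forall>A\<in>M. \<forall>B\<in>M. A + B \<in> M) \<and> (\<forall>t. \<forall>A\<in>M. smat t A \<in> M)"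

definition mathieu_subspace :: "('a::field^'n^'n) set \<Rightarrow> bool" where
  "mathieu_subspace M \<longleftrightarrow> mat_subspace M \<and>
     (\<forall>a b c. (\<forall>m\<ge>1. matpow a m \<in> M) \<longrightarrow> (\<exists>N. \<forall>m\<ge>N. b ** matpow a m ** c \<in> M))"

definition maximal_mathieu_subspace :: "('a::field^'n^'n) set \<Rightarrow> bool" where
  "maximal_mathieu_subspace M \<longleftrightarrow> mathieu_subspace M \<and> M \<noteq> UNIV \<and>
     (\<forall>M'. mathieu_subspace M' \<and> M' \<noteq> UNIV \<and> M \<subseteq> M' \<longrightarrow> M' = M)"

definition one_dim_subspace :: "('a::field^'n^'n) set \<Rightarrow> bool" where
  "one_dim_subspace M \<longleftrightarrow> (\<exists>B. B \<noteq> 0 \<and> M = range (\<lambda>t. smat t B))"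

end

theory Submission
  imports Defs
begin

text \<open>By Cayley--Hamilton, a subspace of \<open>M\<^sub>2(F)\<close> that contains \<open>a\<close> and \<open>a\<^sup>2\<close> but no nonzero
  idempotent has \<open>a\<^sup>2 = 0\<close>; conversely a Mathieu subspace containing a nonzero idempotent contains
  \<open>b e c\<close> for all \<open>b, c\<close> and is everything. So proper Mathieu subspaces are exactly the
  idempotent-free subspaces, and a line \<open>F B\<close> is maximal iff every plane \<open>F B + F D\<close> through it
  contains a nonzero idempotent. The nonzero idempotents are \<open>1\<close> and the matrices of trace \<open>1\<close> and
  determinant \<open>0\<close>, so everything is governed by the quadratic form \<open>det\<close> on such planes.
  If \<open>F B\<close> is maximal, then \<open>tr B \<noteq> 0\<close> and \<open>det B \<noteq> 0\<close>; taking \<open>D\<close> square-zero and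
  \<open>det\<close>-orthogonal to \<open>B\<close>, the only idempotent left in \<open>F B + F D\<close> is \<open>1\<close>, whence
  \<open>B \<in> F (1 + c)\<close> with \<open>c\<^sup>2 = 0\<close>. In characteristic \<open>2\<close> this contradicts \<open>tr B \<noteq> 0\<close>, as
  \<open>tr (1 + c) = 2\<close>; otherwise, for \<open>B = 1 + c\<close> an idempotent of trace \<open>1\<close> in \<open>F B + F D\<close> is a root of a quadratic equation.\<close>

definition mat2 :: "'a \<Rightarrow> 'a \<Rightarrow> 'a \<Rightarrow> 'a \<Rightarrow> 'a^2^2" where
  "mat2 a b c d = (\<chi> i j. if i = 1 then (if j = 1 then a else b) else (if j = 1 then c else d))"

lemma mat2_cases: obtains a b c d where "X = mat2 a b c d"
proof
  show "X = mat2 (X$1$1) (X$1$2) (X$2$1) (X$2$2)"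
    unfolding mat2_def vec_eq_iff forall_2 by simp
qed

lemma mat2_eq_iff [simp]:
  "mat2 a b c d = mat2 a' b' c' d' \<longleftrightarrow> a = a' \<and> b = b' \<and> c = c' \<and> d = d'"
  unfolding mat2_def vec_eq_iff forall_2 by simp

lemma mat2_mult [simp]:
  "mat2 a b c d ** mat2 a' b' c' d' =
     mat2 (a*a' + b*c') (a*b' + b*d') (c*a' + d*c') (c*b' + d*d')"
  unfolding mat2_def vec_eq_iff forall_2 matrix_matrix_mult_def sum_2 by simp

lemma mat2_add [simp]: "mat2 a b c d + mat2 a' b' c' d' = mat2 (a+a') (b+b') (c+c') (d+d')"
  unfolding mat2_def vec_eq_iff forall_2 by simp

lemma smat_mat2 [simp]: "smat t (mat2 a b c d) = mat2 (t*a) (t*b) (t*c) (t*d)"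
  unfolding mat2_def smat_def vec_eq_iff forall_2 by simp

lemma zero_mat2: "0 = mat2 0 0 0 0"
  unfolding mat2_def vec_eq_iff forall_2 by simp

lemma mat_1_mat2: "mat 1 = mat2 1 0 0 1"
  unfolding mat2_def mat_def vec_eq_iff forall_2 by simp

lemma trace_mat2 [simp]: "trace (mat2 a b c d) = a + d"
  by (simp add: trace_def sum_2 mat2_def)

lemma det_mat2 [simp]: "det (mat2 a b c d) = a * d - b * c"
  by (simp add: det_2 mat2_def)

lemma mat_1_neq_0: "mat 1 \<noteq> (0 :: 'a::zero_neq_one^'n^'n)"
  by (auto simp: mat_def vec_eq_iff)

lemma smat_smat: "smat s (smat t A) = smat (s * t) A"
  for A :: "'a::semigroup_mult^'n^'m"
  by (simp add: smat_def vec_eq_iff mult.assoc)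

lemma smat_1 [simp]: "smat 1 A = (A :: 'a::monoid_mult^'n^'m)"
  by (simp add: smat_def vec_eq_iff)

lemma smat_0 [simp]: "smat 0 A = (0 :: 'a::mult_zero^'n^'m)"
  by (simp add: smat_def vec_eq_iff)

lemma smat_zero [simp]: "smat t 0 = (0 :: 'a::mult_zero^'n^'m)"
  by (simp add: smat_def vec_eq_iff)

lemma smat_add_left: "smat (s + t) A = smat s A + smat t A"
  for A :: "'a::semiring^'n^'m"
  by (simp add: smat_def vec_eq_iff distrib_right)

lemma smat_add_right: "smat t (A + B) = smat t A + smat t B"
  for A :: "'a::semiring^'n^'m"
  by (simp add: smat_def vec_eq_iff distrib_left)

lemma smat_matrix_mult: "smat s A ** smat t B = smat (s * t) (A ** B)"
  for A :: "'a::comm_semiring_1^'n^'m"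
  by (simp add: smat_def matrix_matrix_mult_def vec_eq_iff sum_distrib_left mult_ac)

lemma matrix_mult_smat_right: "A ** smat t B = smat t (A ** B)"
  for A :: "'a::comm_semiring_1^'n^'m"
  using smat_matrix_mult[of 1 A t B] by simp

lemma matpow_0 [simp]: "matpow A 0 = mat 1"
  by (simp add: matpow_def)

lemma matpow_Suc [simp]: "matpow A (Suc m) = A ** matpow A m"
  by (simp add: matpow_def)

lemma matpow_idempotent:
  fixes e :: "'a::semiring_1^'n^'n"
  assumes "e ** e = e" and "m \<ge> 1"
  shows "matpow e m = e"
  using assms(2)
proof (induction m rule: dec_induct)
  case base
  then show ?case by (simp add: matrix_mul_rid)
next
  case (step m)
  then show ?case by (simp add: assms(1))
qed

lemma cayley_hamilton_2: "smat (trace X) X = X ** X + smat (det X) (mat 1)"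
  for X :: "'a::comm_ring_1^2^2"
proof -
  obtain a b c d where "X = mat2 a b c d" by (rule mat2_cases)
  then show ?thesis by (simp add: mat_1_mat2 algebra_simps)
qed

lemma idempotent_2_cases:
  fixes X :: "'a::field^2^2"
  assumes "X ** X = X" and "X \<noteq> 0"
  shows "X = mat 1 \<or> trace X = 1 \<and> det X = 0"
proof -
  obtain a b c d where X: "X = mat2 a b c d" by (rule mat2_cases)
  have e: "a*a + b*c = a" "a*b + b*d = b" "c*a + d*c = c" "c*b + d*d = d"
    using assms(1) unfolding X by simp_all
  have nz: "\<not> (a = 0 \<and> b = 0 \<and> c = 0 \<and> d = 0)"
    using assms(2) unfolding X zero_mat2 by simp
  show ?thesis
  proof (cases "a + d = 1")
    case True
    then have "a * d - b * c = 0" using e(1) by algebra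
    then show ?thesis using True X by simp
  next
    case False
    have "(a + d - 1) * b = 0" "(a + d - 1) * c = 0" using e by (simp_all add: algebra_simps)
    then have bc: "b = 0" "c = 0" using False by auto
    then have "a * a = a" "d * d = d" using e by simp_all
    then have "a = 0 \<or> a = 1" "d = 0 \<or> d = 1" by (metis mult_left_cancel mult_1_right)+
    then have "a = 1 \<and> d = 1" using nz bc False by auto
    then show ?thesis using bc X by (simp add: mat_1_mat2)
  qed
qed

lemma idempotent_if_trace_det_2:
  fixes X :: "'a::comm_ring_1^2^2"
  assumes "trace X = 1" and "det X = 0"
  shows "X ** X = X"
  using cayley_hamilton_2[of X] assms by simp

lemma mat_subspaceD:
  assumes "mat_subspace M"
  shows "0 \<in> M" and "A \<in> M \<Longrightarrow> B \<in> M \<Longrightarrow> A + B \<in> M" and "A \<in> M \<Longrightarrow> smat t A \<in> M"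
  using assms unfolding mat_subspace_def by blast+

lemma mat_subspace_sum:
  assumes "mat_subspace M" and "finite S" and "\<And>i. i \<in> S \<Longrightarrow> f i \<in> M"
  shows "sum f S \<in> M"
  using assms(2,3) by (induction S rule: finite_induct) (auto intro: mat_subspaceD[OF assms(1)])

text \<open>The \<open>l\<close>-th summand is the \<open>l\<close>-th column of \<open>X\<close>: multiplying by matrix units isolates the
  nonzero entry \<open>e $ i $ j\<close> and moves it into that column.\<close>
lemma matrix_sum_of_products:
  fixes e X :: "'a::field^'n^'n"
  assumes "e $ i $ j \<noteq> 0"
  shows "X = (\<Sum>l\<in>UNIV. (\<chi> k m. if m = i then X $ k $ l / e $ i $ j else 0) ** e
                             ** (\<chi> m p. if m = j \<and> p = l then 1 else 0))"
proof -
  have left: "((\<chi> k m. if m = i then f k else 0) ** A) $ k $ n = f k * A $ i $ n"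
    for f and A :: "'a^'n^'n" and k n
    by (simp add: matrix_matrix_mult_def if_distrib[of "\<lambda>x. x * _"] cong: if_cong)
  have right: "(A ** (\<chi> m p. if m = j \<and> p = l then 1 else 0)) $ k $ p = (if p = l then A $ k $ j else 0)"
    for A :: "'a^'n^'n" and l k p
    by (simp add: matrix_matrix_mult_def if_distrib[of "\<lambda>x. _ * x"] cong: if_cong)
  show ?thesis
    using assms by (simp add: vec_eq_iff sum_component right left)
qed

lemma mathieu_subspace_UNIV_if_idempotent:
  fixes M :: "('a::field^'n^'n) set"
  assumes ms: "mathieu_subspace M" and "e \<in> M" and idem: "e ** e = e" and "e \<noteq> 0"
  shows "M = UNIV"
proof -
  have products: "b ** e ** c \<in> M" for b c
  proof -
    have "\<forall>m\<ge>1. matpow e m \<in> M" using matpow_idempotent[OF idem] \<open>e \<in> M\<close> by simp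
    then obtain N where "\<forall>m\<ge>N. b ** matpow e m ** c \<in> M"
      using ms unfolding mathieu_subspace_def by blast
    then show ?thesis
      using matpow_idempotent[OF idem, of "max N 1"] by (metis max.cobounded1 max.cobounded2)
  qed
  obtain i j where "e $ i $ j \<noteq> 0" using \<open>e \<noteq> 0\<close> by (auto simp: vec_eq_iff)
  have "X \<in> M" for X
    by (subst matrix_sum_of_products[OF \<open>e $ i $ j \<noteq> 0\<close>])
       (use ms in \<open>auto simp: mathieu_subspace_def intro: mat_subspace_sum products\<close>)
  then show ?thesis by blast
qed

definition idempotent_free :: "('a::semiring_1^'n^'n) set \<Rightarrow> bool" where
  "idempotent_free M \<longleftrightarrow> (\<forall>X\<in>M. X ** X = X \<longrightarrow> X = 0)"

lemma identity_notin_idempotent_free: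
  fixes M :: "('a::{semiring_1,zero_neq_one}^'n^'n) set"
  assumes "idempotent_free M"
  shows "mat 1 \<notin> M"
  using assms mat_1_neq_0 by (auto simp: idempotent_free_def matrix_mul_rid)

text \<open>Otherwise a multiple of \<open>a\<close> or, by Cayley--Hamilton, the identity would be a nonzero
  idempotent in \<open>M\<close>.\<close>
lemma square_zero_if_idempotent_free:
  fixes a :: "'a::field^2^2"
  assumes sub: "mat_subspace M" and free: "idempotent_free M" and "a \<in> M" and "a ** a \<in> M"
  shows "a ** a = 0"
proof (cases "det a = 0")
  case True
  then have square: "a ** a = smat (trace a) a" using cayley_hamilton_2[of a] by simp
  show ?thesis
  proof (cases "trace a = 0")
    case False
    let ?e = "smat (1 / trace a) a"
    have "?e ** ?e = ?e" using False by (simp add: smat_matrix_mult square smat_smat)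
    then have "?e = 0" using free mat_subspaceD(3)[OF sub \<open>a \<in> M\<close>] by (auto simp: idempotent_free_def)
    then have "a = 0" using False smat_smat[of "trace a" "1 / trace a" a] by simp
    then show ?thesis by simp
  qed (simp add: square)
next
  case False
  have "mat 1 = smat (1 / det a) (smat (trace a) a + smat (-1) (a ** a))"
    using cayley_hamilton_2[of a] False
    by (simp add: smat_add_right smat_smat flip: smat_add_left)
  then have "mat 1 \<in> M" using assms(3,4) by (simp add: mat_subspaceD[OF sub])
  then show ?thesis using identity_notin_idempotent_free[OF free] by blast
qed

lemma mathieu_subspace_if_idempotent_free:
  fixes M :: "('a::field^2^2) set"
  assumes sub: "mat_subspace M" and free: "idempotent_free M"
  shows "mathieu_subspace M"
  unfolding mathieu_subspace_def
proof (intro conjI allI impI sub)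
  fix a b c :: "'a^2^2"
  assume powers: "\<forall>m\<ge>1. matpow a m \<in> M"
  have "a \<in> M" using powers[rule_format, of 1] by (simp add: matrix_mul_rid)
  moreover have "a ** a \<in> M" using powers[rule_format, of 2] by (simp add: numeral_2_eq_2 matrix_mul_rid)
  ultimately have "a ** a = 0" by (rule square_zero_if_idempotent_free[OF sub free])
  then have "matpow a (Suc (Suc k)) = 0" for k by (simp add: matrix_mul_assoc)
  then have "b ** matpow a m ** c \<in> M" if "m \<ge> 2" for m
    using that mat_subspaceD(1)[OF sub] by (metis add_2_eq_Suc le_Suc_ex times0_left times0_right)
  then show "\<exists>N. \<forall>m\<ge>N. b ** matpow a m ** c \<in> M" by blast
qed

lemma proper_mathieu_subspace_iff:
  fixes M :: "('a::field^2^2) set"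
  shows "mathieu_subspace M \<and> M \<noteq> UNIV \<longleftrightarrow> mat_subspace M \<and> idempotent_free M"
proof
  assume "mathieu_subspace M \<and> M \<noteq> UNIV"
  then show "mat_subspace M \<and> idempotent_free M"
    using mathieu_subspace_UNIV_if_idempotent
    by (auto simp: idempotent_free_def mathieu_subspace_def)
next
  assume "mat_subspace M \<and> idempotent_free M"
  then show "mathieu_subspace M \<and> M \<noteq> UNIV"
    using mathieu_subspace_if_idempotent_free identity_notin_idempotent_free by blast
qed

definition span2 :: "'a::semiring_1^'n^'m \<Rightarrow> 'a^'n^'m \<Rightarrow> ('a^'n^'m) set" where
  "span2 A B = {smat s A + smat t B | s t. True}"

lemma mat_subspace_line: "mat_subspace (range (\<lambda>t. smat t A))"
  for A :: "'a::field^'n^'n"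
  unfolding mat_subspace_def
  by (auto simp: smat_smat simp flip: smat_add_left intro: range_eqI[of _ _ 0])

lemma mat_subspace_span2: "mat_subspace (span2 A B)"
  for A B :: "'a::field^'n^'n"
proof -
  have "smat s A + smat t B + (smat s' A + smat t' B) = smat (s + s') A + smat (t + t') B" for s t s' t'
    by (simp add: smat_add_left algebra_simps)
  moreover have "smat r (smat s A + smat t B) = smat (r * s) A + smat (r * t) B" for r s t
    by (simp add: smat_add_right smat_smat)
  moreover have "0 = smat 0 A + smat 0 B" by simp
  ultimately show ?thesis unfolding mat_subspace_def span2_def by blast
qed

lemma line_subset_span2: "range (\<lambda>t. smat t A) \<subseteq> span2 A B"
  unfolding span2_def by (force intro: exI[of _ 0])

lemma right_in_span2: "B \<in> span2 A B"
  for A B :: "'a::semiring_1^'n^'m"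
  unfolding span2_def by (intro CollectI exI[of _ 0] exI[of _ 1]) simp

lemma span2_subset:
  assumes "mat_subspace M" and "A \<in> M" and "B \<in> M"
  shows "span2 A B \<subseteq> M"
  using assms unfolding span2_def by (auto intro: mat_subspaceD)

lemma maximal_line_iff:
  fixes B :: "'a::field^2^2"
  shows "maximal_mathieu_subspace (range (\<lambda>t. smat t B)) \<longleftrightarrow>
           idempotent_free (range (\<lambda>t. smat t B)) \<and>
           (\<forall>D. D \<notin> range (\<lambda>t. smat t B) \<longrightarrow> \<not> idempotent_free (span2 B D))"
    (is "maximal_mathieu_subspace ?L \<longleftrightarrow> _")
proof -
  have free_mono: "idempotent_free M" if "idempotent_free M'" and "M \<subseteq> M'" for M M'
    using that by (auto simp: idempotent_free_def)
  have B_in: "B \<in> ?L" by (metis rangeI smat_1)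
  show ?thesis
  proof
    assume max: "maximal_mathieu_subspace ?L"
    then have proper: "mat_subspace ?L \<and> idempotent_free ?L"
      using proper_mathieu_subspace_iff unfolding maximal_mathieu_subspace_def by blast
    have "\<not> idempotent_free (span2 B D)" if "D \<notin> ?L" for D
    proof
      assume "idempotent_free (span2 B D)"
      then have "mathieu_subspace (span2 B D) \<and> span2 B D \<noteq> UNIV"
        using mat_subspace_span2 proper_mathieu_subspace_iff by blast
      then have "span2 B D = ?L"
        using max line_subset_span2 unfolding maximal_mathieu_subspace_def by blast
      then show False using that right_in_span2 by blast
    qed
    then show "idempotent_free ?L \<and> (\<forall>D. D \<notin> ?L \<longrightarrow> \<not> idempotent_free (span2 B D))"
      using proper by blast
  next
    assume free: "idempotent_free ?L \<and> (\<forall>D. D \<notin> ?L \<longrightarrow> \<not> idempotent_free (span2 B D))"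
    have "M' = ?L" if "mathieu_subspace M' \<and> M' \<noteq> UNIV" and "?L \<subseteq> M'" for M'
    proof (rule ccontr)
      assume "M' \<noteq> ?L"
      then obtain D where "D \<in> M'" and "D \<notin> ?L" using \<open>?L \<subseteq> M'\<close> by blast
      have "mat_subspace M' \<and> idempotent_free M'" using that(1) proper_mathieu_subspace_iff by blast
      moreover have "span2 B D \<subseteq> M'"
        using span2_subset B_in \<open>D \<in> M'\<close> \<open>?L \<subseteq> M'\<close> calculation by blast
      ultimately have "idempotent_free (span2 B D)" using free_mono by blast
      then show False using free \<open>D \<notin> ?L\<close> by blast
    qed
    moreover have "mathieu_subspace ?L \<and> ?L \<noteq> UNIV"
      using free mat_subspace_line proper_mathieu_subspace_iff by blast
    ultimately show "maximal_mathieu_subspace ?L"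
      unfolding maximal_mathieu_subspace_def by blast
  qed
qed

lemma smat_eq_0_iff: "smat t A = 0 \<longleftrightarrow> t = 0 \<or> A = 0"
  for A :: "'a::semiring_no_zero_divisors^'n^'m"
  by (auto simp: smat_def vec_eq_iff)

lemma trace_smat: "trace (smat t A) = t * trace A"
  for A :: "'a::semiring_1^'n^'n"
  by (simp add: trace_def smat_def sum_distrib_left)

lemma det_smat_2: "det (smat t X) = t * t * det X"
  for X :: "'a::comm_ring_1^2^2"
  by (cases X rule: mat2_cases) (simp add: algebra_simps)

lemma det_matpow: "det (matpow A k) = det A ^ k"
  for A :: "'a::comm_ring_1^'n^'n"
  by (induction k) (simp_all add: det_mul)

lemma range_smat_smat:
  fixes A :: "'a::field^'n^'m"
  assumes "s \<noteq> 0"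
  shows "range (\<lambda>t. smat t (smat s A)) = range (\<lambda>t. smat t A)"
proof
  show "range (\<lambda>t. smat t (smat s A)) \<subseteq> range (\<lambda>t. smat t A)" by (auto simp: smat_smat)
  show "range (\<lambda>t. smat t A) \<subseteq> range (\<lambda>t. smat t (smat s A))"
  proof
    fix X assume "X \<in> range (\<lambda>t. smat t A)"
    then obtain t where "X = smat t A" by blast
    then have "X = smat (t / s) (smat s A)" using assms by (simp add: smat_smat)
    then show "X \<in> range (\<lambda>t. smat t (smat s A))" by blast
  qed
qed

lemma square_zero_iff_2:
  fixes c :: "'a::field^2^2"
  shows "c ** c = 0 \<longleftrightarrow> trace c = 0 \<and> det c = 0"
proof
  assume square: "c ** c = 0"
  then have "det c * det c = 0" using det_mul[of c c] by (simp add: zero_mat2)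
  then have "det c = 0" by simp
  then have "smat (trace c) c = 0" using cayley_hamilton_2[of c] square by simp
  then have "trace c = 0 \<or> c = 0" by (simp add: smat_eq_0_iff)
  then show "trace c = 0 \<and> det c = 0"
    using \<open>det c = 0\<close> by (auto simp: zero_mat2)
qed (use cayley_hamilton_2[of c] in simp)

lemma square_zero_mat2:
  fixes c :: "'a::field^2^2"
  assumes "c ** c = 0"
  obtains a b e where "c = mat2 a b e (- a)" and "a * a + b * e = 0"
proof -
  obtain a b e d where c: "c = mat2 a b e d" by (rule mat2_cases)
  have "a + d = 0" "a * d - b * e = 0" using assms unfolding square_zero_iff_2 c by simp_all
  then have "d = - a" by (simp add: add_eq_0_iff)
  moreover have "a * a + b * e = 0" using \<open>a * d - b * e = 0\<close> calculation by algebra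
  ultimately show ?thesis using that c by blast
qed

lemma square_zero_if_nilpotent:
  fixes c :: "'a::field^2^2"
  assumes "mat_nilpotent c"
  shows "c ** c = 0"
proof -
  obtain k where k: "matpow c k = 0" using assms unfolding mat_nilpotent_def by blast
  have "k \<noteq> 0" using k mat_1_neq_0 by (metis matpow_0)
  then obtain m where m: "k = Suc m" using not0_implies_Suc by blast
  have "det c ^ k = 0" using k det_matpow[of c k] by (simp add: zero_mat2)
  then have "det c = 0" by simp
  then have square: "c ** c = smat (trace c) c" using cayley_hamilton_2[of c] by simp
  have "matpow c (Suc n) = smat (trace c ^ n) c" for n
    by (induction n) (simp_all add: matrix_mul_rid matrix_mult_smat_right square smat_smat mult.commute)
  then have "smat (trace c ^ m) c = 0" using k m by simp
  then have "trace c = 0 \<or> c = 0" by (metis smat_eq_0_iff power_eq_0_iff)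
  then show ?thesis using square by auto
qed

lemma idempotent_free_if_traceless:
  fixes M :: "('a::field^2^2) set"
  assumes "\<And>X. X \<in> M \<Longrightarrow> trace X = 0" and "mat 1 \<notin> M"
  shows "idempotent_free M"
  unfolding idempotent_free_def
  using assms idempotent_2_cases by fastforce

lemma trace_neq_0_if_no_extension:
  fixes B :: "'a::field^2^2"
  assumes "B \<noteq> 0" and free: "idempotent_free (range (\<lambda>t. smat t B))"
    and no_extension: "\<And>D. D \<notin> range (\<lambda>t. smat t B) \<Longrightarrow> \<not> idempotent_free (span2 B D)"
  shows "trace B \<noteq> 0"
proof
  assume "trace B = 0"
  then obtain p q r where B: "B = mat2 p q r (- p)"
    by (metis add_eq_0_iff mat2_cases trace_mat2)
  have "\<exists>D. D \<notin> range (\<lambda>t. smat t B) \<and> trace D = 0 \<and> mat 1 \<notin> span2 B D"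
  proof -
    consider "q \<noteq> 0" | "q = 0" "r = 0" "- p = p" | "q = 0" "\<not> (r = 0 \<and> - p = p)" by blast
    then show ?thesis
    proof cases
      case 1
      then show ?thesis
        by (intro exI[of _ "mat2 0 0 1 0"]) (auto simp: B span2_def mat_1_mat2)
    next
      case 2
      then have "p \<noteq> 0" and "smat (1 / p) B = mat 1"
        using \<open>B \<noteq> 0\<close> by (auto simp: B zero_mat2 mat_1_mat2)
      then show ?thesis using identity_notin_idempotent_free[OF free] by (metis rangeI)
    next
      case 3
      then show ?thesis
        by (intro exI[of _ "mat2 0 1 0 0"]) (auto simp: B span2_def mat_1_mat2)
    qed
  qed
  then obtain D where "D \<notin> range (\<lambda>t. smat t B)" "trace D = 0" "mat 1 \<notin> span2 B D"
    by blast
  moreover have "trace X = 0" if "X \<in> span2 B D" for X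
    using that \<open>trace B = 0\<close> \<open>trace D = 0\<close> by (auto simp: span2_def trace_add trace_smat)
  ultimately show False using no_extension idempotent_free_if_traceless by blast
qed

lemma det_neq_0_if_idempotent_free_line:
  fixes B :: "'a::field^2^2"
  assumes "trace B \<noteq> 0" and free: "idempotent_free (range (\<lambda>t. smat t B))"
  shows "det B \<noteq> 0"
proof
  assume "det B = 0"
  let ?e = "smat (1 / trace B) B"
  have "trace ?e = 1" "det ?e = 0"
    using assms(1) \<open>det B = 0\<close> by (simp_all add: trace_smat det_smat_2)
  then have "?e ** ?e = ?e" and "?e \<noteq> 0"
    by (auto simp: idempotent_if_trace_det_2 zero_mat2)
  then show False using free unfolding idempotent_free_def by blast
qed

lemma quadratic_has_root:
  fixes a b c :: "'a::alg_closed_field"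
  assumes "a \<noteq> 0 \<or> b \<noteq> 0"
  shows "\<exists>t. a * t * t + b * t + c = 0"
proof (cases "a = 0")
  case True
  then show ?thesis using assms by (intro exI[of _ "- c / b"]) (simp add: field_simps)
next
  case False
  define f where "f = (\<lambda>k::nat. if k = 0 then c else if k = 1 then b else a)"
  obtain t where "(\<Sum>k\<le>2. f k * t ^ k) = 0"
    using alg_closed[of 2 f] False by (auto simp: f_def)
  then have "a * t * t + b * t + c = 0"
    by (simp add: f_def numeral_2_eq_2 power2_eq_square algebra_simps)
  then show ?thesis by blast
qed

text \<open>\<open>D\<close> is square-zero and orthogonal to \<open>B\<close> for the polarisation of the quadratic form \<open>det\<close>.
  In the coordinates \<open>(x, y, z)\<close> of the traceless \<open>D\<close> these are one linear and one quadratic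
  equation, which have a common nonzero solution over an algebraically closed field.\<close>
lemma exists_det_orthogonal_traceless:
  fixes B :: "'a::alg_closed_field^2^2"
  shows "\<exists>D. D \<noteq> 0 \<and> trace D = 0 \<and> (\<forall>s t. det (smat s B + smat t D) = s * s * det B)"
proof -
  obtain p q r u where B: "B = mat2 p q r u" by (rule mat2_cases)
  obtain x y z where isotropic: "x * x + y * z = 0" and orthogonal: "(u - p) * x - r * y - q * z = 0"
    and nonzero: "\<not> (x = 0 \<and> y = 0 \<and> z = 0)"
  proof -
    consider "r = 0" | "q = 0" | "r \<noteq> 0" "q \<noteq> 0" by blast
    then show ?thesis
    proof cases
      case 3
      then obtain x where "q * x * x + (u - p) * x + - r = 0"
        using quadratic_has_root[of q "u - p" "- r"] by blast
      then have "(u - p) * x - r * 1 - q * (- (x * x)) = 0" by algebra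
      then show ?thesis using that[of x 1 "- (x * x)"] by simp
    qed (use that[of 0 1 0] that[of 0 0 1] in simp_all)
  qed
  have "det (smat s B + smat t (mat2 x y z (- x))) = s * s * det B" for s t
    unfolding B using isotropic orthogonal by simp algebra
  then show ?thesis
    using nonzero by (intro exI[of _ "mat2 x y z (- x)"]) (auto simp: zero_mat2)
qed

lemma identity_in_det_orthogonal_plane:
  fixes B D :: "'a::field^2^2"
  assumes "det B \<noteq> 0" and "trace D = 0"
    and det_orthogonal: "\<And>s t. det (smat s B + smat t D) = s * s * det B"
    and "\<not> idempotent_free (span2 B D)"
  obtains s t where "s \<noteq> 0" and "smat s B + smat t D = mat 1"
proof -
  obtain s t where idem: "(smat s B + smat t D) ** (smat s B + smat t D) = smat s B + smat t D"
    and "smat s B + smat t D \<noteq> 0"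
    using assms(4) unfolding idempotent_free_def span2_def by blast
  moreover have "trace (smat s B + smat t D) = s * trace B"
    using \<open>trace D = 0\<close> by (simp add: trace_add trace_smat)
  ultimately have identity: "smat s B + smat t D = mat 1"
    using idempotent_2_cases det_orthogonal \<open>det B \<noteq> 0\<close> by fastforce
  have "s \<noteq> 0"
  proof
    assume "s = 0"
    then have "det (mat 1 :: 'a^2^2) = 0" using identity det_orthogonal[of s t] by simp
    then show False by simp
  qed
  then show ?thesis using that identity by blast
qed

lemma identity_plus_square_zero_if_no_extension:
  fixes B :: "'a::alg_closed_field^2^2"
  assumes "B \<noteq> 0" and free: "idempotent_free (range (\<lambda>t. smat t B))"
    and no_extension: "\<And>D. D \<notin> range (\<lambda>t. smat t B) \<Longrightarrow> \<not> idempotent_free (span2 B D)"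
  obtains s c where "s \<noteq> 0" "c \<noteq> 0" "c ** c = 0" "B = smat s (mat 1 + c)"
proof -
  have "trace B \<noteq> 0" using trace_neq_0_if_no_extension assms by blast
  then have "det B \<noteq> 0" using det_neq_0_if_idempotent_free_line free by blast
  obtain D where "D \<noteq> 0" "trace D = 0"
    and det_orthogonal: "\<And>s t. det (smat s B + smat t D) = s * s * det B"
    using exists_det_orthogonal_traceless by blast
  have "det D = 0" using det_orthogonal[of 0 1] by simp
  have "D \<notin> range (\<lambda>t. smat t B)"
  proof
    assume "D \<in> range (\<lambda>t. smat t B)"
    then obtain t where "D = smat t B" by blast
    then have "t * t * det B = 0" using \<open>det D = 0\<close> by (simp add: det_smat_2)
    then show False using \<open>D = smat t B\<close> \<open>D \<noteq> 0\<close> \<open>det B \<noteq> 0\<close> by simp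
  qed
  then obtain s t where "s \<noteq> 0" and identity: "smat s B + smat t D = mat 1"
    using identity_in_det_orthogonal_plane \<open>det B \<noteq> 0\<close> \<open>trace D = 0\<close> det_orthogonal no_extension
    by metis
  define c where "c = smat (- t) D"
  have "mat 1 + c = smat s B"
    by (simp add: c_def flip: identity add.assoc smat_add_left)
  then have "B = smat (1 / s) (mat 1 + c)" using \<open>s \<noteq> 0\<close> by (simp add: smat_smat)
  moreover have "c ** c = 0"
    using square_zero_iff_2[of D] \<open>trace D = 0\<close> \<open>det D = 0\<close> by (simp add: c_def smat_matrix_mult)
  moreover have "c \<noteq> 0"
  proof
    assume "c = 0"
    then have "smat s B = mat 1" using \<open>mat 1 + c = smat s B\<close> by simp
    then show False using identity_notin_idempotent_free[OF free] by (metis rangeI)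
  qed
  ultimately show ?thesis using that[of "1 / s" c] \<open>s \<noteq> 0\<close> by simp
qed

lemma idempotent_free_line_identity_plus_square_zero:
  fixes c :: "'a::field^2^2"
  assumes "(2::'a) \<noteq> 0" and "c \<noteq> 0" and "c ** c = 0"
  shows "idempotent_free (range (\<lambda>t. smat t (mat 1 + c)))"
  unfolding idempotent_free_def
proof (intro ballI impI)
  fix X assume "X \<in> range (\<lambda>t. smat t (mat 1 + c))" and idem: "X ** X = X"
  then obtain t where X_t: "X = smat t (mat 1 + c)" by blast
  obtain a b e where c: "c = mat2 a b e (- a)" and isotropic: "a * a + b * e = 0"
    using square_zero_mat2[OF assms(3)] by blast
  have X: "X = mat2 (t * (1 + a)) (t * b) (t * e) (t * (1 - a))"
    unfolding X_t c mat_1_mat2 by simp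
  show "X = 0"
  proof (rule ccontr)
    assume "X \<noteq> 0"
    then consider "X = mat 1" | "trace X = 1" "det X = 0"
      using idempotent_2_cases[OF idem] by blast
    then show False
    proof cases
      case 1
      then have "t * b = 0" "t * e = 0" "t * (1 + a) = 1" "t * (1 - a) = 1"
        unfolding X mat_1_mat2 by simp_all
      moreover have "2 * t * a = t * (1 + a) - t * (1 - a)" by (simp add: algebra_simps)
      ultimately have "t \<noteq> 0" "b = 0" "e = 0" "2 * t * a = 0" by auto
      then have "a = 0" using assms(1) by simp
      then show False using assms(2) \<open>b = 0\<close> \<open>e = 0\<close> unfolding c zero_mat2 by simp
    next
      case 2
      then have "2 * t = 1" "t * t * (1 - (a * a + b * e)) = 0"
        unfolding X by (simp_all add: algebra_simps)
      then show False using isotropic by auto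
    qed
  qed
qed

lemma identity_in_span2:
  fixes c D :: "'a::field^'n^'n"
  assumes "D = smat \<alpha> (mat 1) + smat \<beta> c" and "\<alpha> \<noteq> \<beta>"
  shows "mat 1 \<in> span2 (mat 1 + c) D"
proof -
  define w where "w = 1 / (\<alpha> - \<beta>)"
  have w: "w * (\<alpha> - \<beta>) = 1" using assms(2) by (simp add: w_def)
  have "(smat (- \<beta> * w) (mat 1 + c) + smat w D) $ i $ j = mat 1 $ i $ j" for i j
    using w by (cases "i = j") (simp_all add: assms(1) smat_def mat_def algebra_simps)
  then have "mat 1 = smat (- \<beta> * w) (mat 1 + c) + smat w D"
    by (simp add: vec_eq_iff)
  then show ?thesis unfolding span2_def by blast
qed

text \<open>On traceless matrices \<open>(x, y, z) \<mapsto> x\<^sup>2 + y z\<close> is, up to sign, the nondegenerate quadratic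
  form \<open>det\<close>; its totally isotropic subspaces are lines.\<close>
lemma isotropic_orthogonal_proportional:
  fixes a b e x y z :: "'a::field"
  assumes "a * a + b * e = 0" and "x * x + y * z = 0" and "2 * a * x + b * z + e * y = 0"
    and "\<not> (a = 0 \<and> b = 0 \<and> e = 0)"
  obtains l where "x = l * a" "y = l * b" "z = l * e"
proof -
  have "(a * y - b * x) * (a * y - b * x) = 0" using assms(1-3) by algebra
  then have ay: "a * y = b * x" by simp
  have "(a * z - e * x) * (a * z - e * x) = 0" using assms(1-3) by algebra
  then have az: "a * z = e * x" by simp
  have "(b * z - e * y) * (b * z - e * y) = 0" using assms(1-3) by algebra
  then have bz: "b * z = e * y" by simp
  consider "a \<noteq> 0" | "a = 0" "b \<noteq> 0" | "a = 0" "b = 0" "e \<noteq> 0" using assms(4) by blast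
  then show ?thesis
  proof cases
    case 1
    then show ?thesis using that[of "x / a"] ay az by (simp add: field_simps)
  next
    case 2
    then show ?thesis using that[of "y / b"] ay bz by (simp add: field_simps)
  next
    case 3
    then show ?thesis using that[of "z / e"] az bz by (simp add: field_simps)
  qed
qed

text \<open>Writing \<open>D = h (1 + c) + N\<close> with \<open>N\<close> traceless, the matrices \<open>\<frac>1\<slash>2 (1 + c) + t N\<close> have trace
  \<open>1\<close>, and their determinant is a quadratic polynomial in \<open>t\<close> with constant term \<open>\<frac>1\<slash>4\<close>. It has a
  root unless \<open>N\<close> is isotropic and orthogonal to \<open>c\<close>, i.e.\ unless \<open>N\<close> is a multiple of \<open>c\<close>.\<close>
lemma not_idempotent_free_span2_if_notin_span2:
  fixes c D :: "'a::alg_closed_field^2^2"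
  assumes two: "(2::'a) \<noteq> 0" and "c \<noteq> 0" and "c ** c = 0" and "D \<notin> span2 (mat 1) c"
  shows "\<not> idempotent_free (span2 (mat 1 + c) D)"
proof -
  obtain a b e where c: "c = mat2 a b e (- a)" and isotropic: "a * a + b * e = 0"
    using square_zero_mat2[OF assms(3)] by blast
  have nonzero: "\<not> (a = 0 \<and> b = 0 \<and> e = 0)" using \<open>c \<noteq> 0\<close> by (auto simp: c zero_mat2)
  obtain d1 d2 d3 d4 where D: "D = mat2 d1 d2 d3 d4" by (rule mat2_cases)
  define k :: 'a where "k = 1 / 2"
  have k: "2 * k = 1" using two by (simp add: k_def)
  define h where "h = k * (d1 + d4)"
  define x y z where "x = d1 - h * (1 + a)" and "y = d2 - h * b" and "z = d3 - h * e"
  have d4: "d4 = - x + h * (1 - a)" using k unfolding x_def h_def by algebra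
  have "\<not> (x * x + y * z = 0 \<and> 2 * a * x + b * z + e * y = 0)"
  proof
    assume "x * x + y * z = 0 \<and> 2 * a * x + b * z + e * y = 0"
    then obtain l where l: "x = l * a" "y = l * b" "z = l * e"
      using isotropic_orthogonal_proportional[OF isotropic _ _ nonzero] by blast
    have "D = smat h (mat 1) + smat (h + l) c"
      unfolding D c mat_1_mat2 smat_mat2 mat2_add mat2_eq_iff
      using l d4 unfolding x_def y_def z_def by algebra
    then show False using \<open>D \<notin> span2 (mat 1) c\<close> unfolding span2_def by blast
  qed
  moreover have "k \<noteq> 0" using k by auto
  ultimately have "x * x + y * z \<noteq> 0 \<or> k * (2 * a * x + b * z + e * y) \<noteq> 0" by auto
  then have "- (x * x + y * z) \<noteq> 0 \<or> - (k * (2 * a * x + b * z + e * y)) \<noteq> 0"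
    by (simp only: neg_equal_0_iff_equal)
  then obtain t where t: "- (x * x + y * z) * t * t + - (k * (2 * a * x + b * z + e * y)) * t + k * k = 0"
    using quadratic_has_root by blast
  let ?X = "smat (k - t * h) (mat 1 + c) + smat t D"
  have X: "?X = mat2 ((k - t * h) * (1 + a) + t * d1) ((k - t * h) * b + t * d2)
                      ((k - t * h) * e + t * d3) ((k - t * h) * (1 - a) + t * d4)"
    unfolding D c mat_1_mat2 by simp
  have "trace ?X = 2 * k + t * (d1 + d4 - 2 * h)" unfolding X by (simp add: algebra_simps)
  then have "trace ?X = 1" using k unfolding h_def by algebra
  moreover have "det ?X = 0" unfolding X det_mat2 d4 using t isotropic k
    unfolding x_def y_def z_def by algebra
  ultimately have "?X ** ?X = ?X" and "?X \<noteq> 0"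
    by (auto simp: idempotent_if_trace_det_2 zero_mat2)
  moreover have "?X \<in> span2 (mat 1 + c) D" unfolding span2_def by blast
  ultimately show ?thesis unfolding idempotent_free_def by blast
qed

lemma not_idempotent_free_extension:
  fixes c D :: "'a::alg_closed_field^2^2"
  assumes "(2::'a) \<noteq> 0" and "c \<noteq> 0" and "c ** c = 0"
    and not_in: "D \<notin> range (\<lambda>t. smat t (mat 1 + c))"
  shows "\<not> idempotent_free (span2 (mat 1 + c) D)"
proof (cases "D \<in> span2 (mat 1) c")
  case True
  then obtain \<alpha> \<beta> where D: "D = smat \<alpha> (mat 1) + smat \<beta> c" unfolding span2_def by blast
  have "\<alpha> \<noteq> \<beta>"
  proof
    assume "\<alpha> = \<beta>"
    then have "D = smat \<alpha> (mat 1 + c)" by (simp add: D smat_add_right)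
    then show False using not_in by blast
  qed
  then have "mat 1 \<in> span2 (mat 1 + c) D" by (rule identity_in_span2[OF D])
  then show ?thesis using identity_notin_idempotent_free by blast
qed (use assms not_idempotent_free_span2_if_notin_span2 in blast)

lemma two_eq_0_iff_CHAR_2: "(2::'a::field) = 0 \<longleftrightarrow> CHAR('a) = 2"
proof -
  have "(2::'a) = 0 \<longleftrightarrow> CHAR('a) dvd 2"
    using of_nat_eq_0_iff_char_dvd[of 2, where 'a='a] by simp
  also have "\<dots> \<longleftrightarrow> CHAR('a) = 2"
  proof
    assume "CHAR('a) dvd 2"
    then have "CHAR('a) \<le> 2" and "CHAR('a) \<noteq> 0" by (auto dest: dvd_imp_le intro: gr0I)
    then show "CHAR('a) = 2" using CHAR_not_1 by (metis le_antisym less_2_cases_iff not_le One_nat_def)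
  qed simp
  finally show ?thesis .
qed

lemma trace_identity_plus_2: "trace (mat 1 + c) = 2 + trace c"
  for c :: "'a::comm_ring_1^2^2"
  by (simp add: trace_add trace_I)

lemma nilpotent_if_square_zero: "c ** c = 0 \<Longrightarrow> mat_nilpotent c"
  unfolding mat_nilpotent_def by (intro exI[of _ 2]) (simp add: numeral_2_eq_2 matrix_mul_rid)

lemma one_dim_maximal_mathieu_subspace_iff:
  fixes M :: "('a::alg_closed_field^2^2) set"
  assumes two: "(2::'a) \<noteq> 0"
  shows "one_dim_subspace M \<and> maximal_mathieu_subspace M \<longleftrightarrow>
           (\<exists>c. c \<noteq> 0 \<and> mat_nilpotent c \<and> M = range (\<lambda>t. smat t (mat 1 + c)))"
proof
  assume "one_dim_subspace M \<and> maximal_mathieu_subspace M"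
  then obtain B where "B \<noteq> 0" "M = range (\<lambda>t. smat t B)" "maximal_mathieu_subspace M"
    unfolding one_dim_subspace_def by blast
  then obtain s c where "s \<noteq> 0" "c \<noteq> 0" "c ** c = 0" "M = range (\<lambda>t. smat t (smat s (mat 1 + c)))"
    using identity_plus_square_zero_if_no_extension maximal_line_iff by metis
  then show "\<exists>c. c \<noteq> 0 \<and> mat_nilpotent c \<and> M = range (\<lambda>t. smat t (mat 1 + c))"
    using range_smat_smat nilpotent_if_square_zero by metis
next
  assume "\<exists>c. c \<noteq> 0 \<and> mat_nilpotent c \<and> M = range (\<lambda>t. smat t (mat 1 + c))"
  then obtain c where "c \<noteq> 0" "c ** c = 0" and M: "M = range (\<lambda>t. smat t (mat 1 + c))"
    using square_zero_if_nilpotent by blast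
  then have "trace (mat 1 + c) \<noteq> 0"
    using two by (simp add: trace_identity_plus_2 square_zero_iff_2)
  then have "mat 1 + c \<noteq> 0" by (metis mat_0 trace_0)
  then have "one_dim_subspace M" unfolding one_dim_subspace_def M by blast
  moreover have "maximal_mathieu_subspace M"
    unfolding M maximal_line_iff
    using idempotent_free_line_identity_plus_square_zero not_idempotent_free_extension
      two \<open>c \<noteq> 0\<close> \<open>c ** c = 0\<close> by blast
  ultimately show "one_dim_subspace M \<and> maximal_mathieu_subspace M" ..
qed

lemma no_one_dim_maximal_mathieu_subspace:
  fixes M :: "('a::alg_closed_field^2^2) set"
  assumes "(2::'a) = 0" and "one_dim_subspace M"
  shows "\<not> maximal_mathieu_subspace M"
proof
  assume "maximal_mathieu_subspace M"
  then obtain B :: "'a^2^2" where "B \<noteq> 0" and "maximal_mathieu_subspace (range (\<lambda>t. smat t B))"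
    using \<open>one_dim_subspace M\<close> unfolding one_dim_subspace_def by blast
  then have "trace B \<noteq> 0" and "\<exists>s c. c ** c = 0 \<and> B = smat s (mat 1 + c)"
    using trace_neq_0_if_no_extension identity_plus_square_zero_if_no_extension maximal_line_iff
    by metis+
  then show False
    using assms(1) by (auto simp: trace_smat trace_identity_plus_2 square_zero_iff_2)
qed

theorem corollary3p4:
  fixes F_witness :: "'a::alg_closed_field itself"
  shows "(CHAR('a) \<noteq> 2 \<longrightarrow>
           (\<forall>M :: ('a^2^2) set. (one_dim_subspace M \<and> maximal_mathieu_subspace M) \<longleftrightarrow>
              (\<exists>c. c \<noteq> 0 \<and> mat_nilpotent c \<and> M = range (\<lambda>t. smat t (mat 1 + c)))))
       \<and> (CHAR('a) = 2 \<longrightarrow>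
           \<not> (\<exists>M :: ('a^2^2) set. one_dim_subspace M \<and> maximal_mathieu_subspace M))"
  using one_dim_maximal_mathieu_subspace_iff no_one_dim_maximal_mathieu_subspace
  by (auto simp: two_eq_0_iff_CHAR_2)

end
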